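(* Fix $\eta>0$, $\lambda\in\mathbb{R}^{2md}$ and $i\in V$, and let $\lambda'$ be obtained from $\lambda$ by replacing, for every $e\in N_i$, the block $\lambda_{e,i}$ with $$\lambda'_{e,i}(x)=\lambda_{e,i}(x)+\frac1\eta\log S^\lambda_{e,i}(x)-\frac{1}{\eta(|N_i|+1)}\log\Big(\mu^\lambda_i(x)\prod_{e'\in N_i}S^\lambda_{e',i}(x)\Big),\quad x\in\chi,$$ all other coordinates unchanged. Then $$L(\lambda)-L(\lambda')\ \ge\ \frac{1}{8|N_i|\eta}\sum_{e\in N_i}\|\nu^\lambda_{e,i}\|_1^2.$$
   Context: Let $G=(V,E)$ be a finite undirected graph with $n=|V|$, $m=|E|$, every vertex incident to at least one edge; $N_i=\{e\in E:i\in e\}$. $\chi$ is a finite label set with $d=|\chi|\ge2$. Costs $C_i\in\mathbb{R}^\chi$, $C_e\in\mathbb{R}^{\chi^2}$; for $e=\{i,j\}$, $x_e=(x_i,x_j)$ and $(x_e)_i=x_i$. Dual variables $\lambda=(\lambda_{e,i}(x))_{e\in E,i\in e,x\in\chi}\in\mathbb{R}^{2md}$ and $$L(\lambda)=\frac1\eta\sum_{i\in V}\log\sum_{x\in\chi}\exp\Big(-\eta C_i(x)+\eta\sum_{e\in N_i}\lambda_{e,i}(x)\Big)+\frac1\eta\sum_{e\in E}\log\sum_{x_e\in\chi^2}\exp\Big(-\eta C_e(x_e)-\eta\sum_{i\in e}\lambda_{e,i}((x_e)_i)\Big).$$ $\mu^\lambda_i(x)\propto\exp(-\eta C_i(x)+\eta\sum_{e\in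 N_i}\lambda_{e,i}(x))$, $\mu^\lambda_e(x_e)\propto\exp(-\eta C_e(x_e)-\eta\sum_{i\in e}\lambda_{e,i}((x_e)_i))$, each normalized to sum to $1$; $S^\lambda_{e,i}(x)=\sum_{x_e:(x_e)_i=x}\mu^\lambda_e(x_e)$; slack $\nu^\lambda_{e,i}=S^\lambda_{e,i}-\mu^\lambda_i$. *)

theory Defs
  imports Complex_Main "HOL-Library.FuncSet"
begin

text \<open>An edge labelling x_e is a function from the edge e to X (extensional, via PiE),
  so (x_e)_i = x_e i.\<close>

definition Nb :: "'v set set \<Rightarrow> 'v \<Rightarrow> 'v set set" where
  "Nb E i = {e \<in> E. i \<in> e}"

definition edge_labs :: "'v set \<Rightarrow> 'x set \<Rightarrow> ('v \<Rightarrow> 'x) set" where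
  "edge_labs e X = PiE e (\<lambda>_. X)"

definition Ldual :: "real \<Rightarrow> 'v set \<Rightarrow> 'v set set \<Rightarrow> 'x set \<Rightarrow> ('v \<Rightarrow> 'x \<Rightarrow> real)
    \<Rightarrow> ('v set \<Rightarrow> ('v \<Rightarrow> 'x) \<Rightarrow> real) \<Rightarrow> ('v set \<Rightarrow> 'v \<Rightarrow> 'x \<Rightarrow> real) \<Rightarrow> real" where
  "Ldual eta V E X Cv Ce lam =
     (1/eta) * (\<Sum>i\<in>V. ln (\<Sum>x\<in>X. exp (- eta * Cv i x + eta * (\<Sum>e\<in>Nb E i. lam e i x))))
   + (1/eta) * (\<Sum>e\<in>E. ln (\<Sum>xe\<in>edge_labs e X. exp (- eta * Ce e xe - eta * (\<Sum>i\<in>e. lam e i (xe i)))))"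

definition mu_v :: "real \<Rightarrow> 'v set set \<Rightarrow> 'x set \<Rightarrow> ('v \<Rightarrow> 'x \<Rightarrow> real)
    \<Rightarrow> ('v set \<Rightarrow> 'v \<Rightarrow> 'x \<Rightarrow> real) \<Rightarrow> 'v \<Rightarrow> 'x \<Rightarrow> real" where
  "mu_v eta E X Cv lam i x =
     exp (- eta * Cv i x + eta * (\<Sum>e\<in>Nb E i. lam e i x))
     / (\<Sum>y\<in>X. exp (- eta * Cv i y + eta * (\<Sum>e\<in>Nb E i. lam e i y)))"

definition mu_e :: "real \<Rightarrow> 'x set \<Rightarrow> ('v set \<Rightarrow> ('v \<Rightarrow> 'x) \<Rightarrow> real)
    \<Rightarrow> ('v set \<Rightarrow> 'v \<Rightarrow> 'x \<Rightarrow> real) \<Rightarrow> 'v set \<Rightarrow> ('v \<Rightarrow> 'x) \<Rightarrow> real" where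
  "mu_e eta X Ce lam e xe =
     exp (- eta * Ce e xe - eta * (\<Sum>i\<in>e. lam e i (xe i)))
     / (\<Sum>ye\<in>edge_labs e X. exp (- eta * Ce e ye - eta * (\<Sum>i\<in>e. lam e i (ye i))))"

definition Smarg :: "real \<Rightarrow> 'x set \<Rightarrow> ('v set \<Rightarrow> ('v \<Rightarrow> 'x) \<Rightarrow> real)
    \<Rightarrow> ('v set \<Rightarrow> 'v \<Rightarrow> 'x \<Rightarrow> real) \<Rightarrow> 'v set \<Rightarrow> 'v \<Rightarrow> 'x \<Rightarrow> real" where
  "Smarg eta X Ce lam e i x = (\<Sum>xe\<in>{xe \<in> edge_labs e X. xe i = x}. mu_e eta X Ce lam e xe)"

definition slack :: "real \<Rightarrow> 'v set set \<Rightarrow> 'x set \<Rightarrow> ('v \<Rightarrow> 'x \<Rightarrow> real)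
    \<Rightarrow> ('v set \<Rightarrow> ('v \<Rightarrow> 'x) \<Rightarrow> real) \<Rightarrow> ('v set \<Rightarrow> 'v \<Rightarrow> 'x \<Rightarrow> real) \<Rightarrow> 'v set \<Rightarrow> 'v \<Rightarrow> 'x \<Rightarrow> real" where
  "slack eta E X Cv Ce lam e i x = Smarg eta X Ce lam e i x - mu_v eta E X Cv lam i x"

definition upd :: "real \<Rightarrow> 'v set set \<Rightarrow> 'x set \<Rightarrow> ('v \<Rightarrow> 'x \<Rightarrow> real)
    \<Rightarrow> ('v set \<Rightarrow> ('v \<Rightarrow> 'x) \<Rightarrow> real) \<Rightarrow> ('v set \<Rightarrow> 'v \<Rightarrow> 'x \<Rightarrow> real) \<Rightarrow> 'v
    \<Rightarrow> ('v set \<Rightarrow> 'v \<Rightarrow> 'x \<Rightarrow> real)" where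
  "upd eta E X Cv Ce lam i = (\<lambda>e j x.
     if e \<in> Nb E i \<and> j = i then
       lam e i x + (1/eta) * ln (Smarg eta X Ce lam e i x)
       - 1 / (eta * (real (card (Nb E i)) + 1))
         * ln (mu_v eta E X Cv lam i x * (\<Prod>e'\<in>Nb E i. Smarg eta X Ce lam e' i x))
     else lam e j x)"

end

theory Submission
  imports Defs "HOL-Analysis.Convex"
begin

text \<open>Write n = |N_i| + 1 and let G be the pointwise geometric mean of mu_i and the S_{e,i},
  e in N_i. The update shifts each block lambda_{e,i} by (ln S_{e,i} - ln G) / eta, so the Gibbs
  weights of vertex i and of each edge e in N_i are rescaled by G / mu_i and G / S_{e,i}.
  Hence each of these n partition functions is multiplied by sum_x G(x), all others are
  unchanged, and L(lambda) - L(lambda') = - n ln (sum_x G(x)) / eta.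
  AM-GM applied to square roots, followed by Cauchy-Schwarz, gives sum_x G(x) <= 1 - H / n^2,
  where H is the sum of the squared Hellinger distances |sqrt S_{e,i} - sqrt mu_i|^2; now
  ln t <= t - 1, |p - q|_1^2 <= 4 |sqrt p - sqrt q|^2 and n <= 2 |N_i| finish the proof.\<close>

lemma geometric_mean_le_sq_mean_sqrt:
  fixes p :: "'j \<Rightarrow> real"
  assumes "finite J" and "q \<ge> 0" and "\<And>j. j \<in> J \<Longrightarrow> p j \<ge> 0"
  shows "(q * (\<Prod>j\<in>J. p j)) powr (1 / (real (card J) + 1))
    \<le> ((sqrt q + (\<Sum>j\<in>J. sqrt (p j))) / (real (card J) + 1))\<^sup>2"
proof -
  define n where "n = real (card J) + 1"
  \<comment> \<open>AM-GM for the square roots, with \<open>q\<close> adjoined to the family as index \<open>None\<close>.\<close>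
  define a where "a = case_option (sqrt q) (\<lambda>j. sqrt (p j))"
  define S where "S = insert None (Some ` J)"
  have card_S: "real (card S) = n"
    using assms(1) by (simp add: S_def n_def card_image)
  have sum_S: "(\<Sum>s\<in>S. a s) = sqrt q + (\<Sum>j\<in>J. sqrt (p j))"
    using assms(1) by (simp add: S_def a_def sum.reindex)
  have "(\<Prod>j\<in>J. sqrt (p j)) = sqrt (\<Prod>j\<in>J. p j)"
    using assms(1) by (induction J rule: finite_induct) (auto simp: real_sqrt_mult)
  then have prod_S: "(\<Prod>s\<in>S. a s) = sqrt (q * (\<Prod>j\<in>J. p j))"
    using assms(1) by (simp add: S_def a_def prod.reindex real_sqrt_mult)
  have "(\<Prod>s\<in>S. a s) powr (1 / card S) \<le> (\<Sum>s\<in>S. a s / card S)"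
    using assms(1,2,3) by (intro arith_geom_mean) (auto simp: S_def a_def)
  then have "(\<Prod>s\<in>S. a s) powr (1 / n) \<le> (\<Sum>s\<in>S. a s) / n"
    by (simp add: card_S sum_divide_distrib)
  moreover have "(q * (\<Prod>j\<in>J. p j)) powr (1 / n) = ((\<Prod>s\<in>S. a s) powr (1 / n))\<^sup>2"
    unfolding prod_S power2_eq_square
    by (simp add: powr_mult[symmetric] assms prod_nonneg)
  ultimately show ?thesis
    unfolding n_def[symmetric] sum_S[symmetric] by (simp add: power_mono)
qed

lemma sq_mean_le_mean_sq_sub_spread:
  fixes a :: "'j \<Rightarrow> real"
  assumes "finite K"
  shows "((c + (\<Sum>j\<in>K. a j)) / (real (card K) + 1))\<^sup>2
    \<le> (c\<^sup>2 + (\<Sum>j\<in>K. (a j)\<^sup>2)) / (real (card K) + 1)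
      - (\<Sum>j\<in>K. (a j - c)\<^sup>2) / (real (card K) + 1)\<^sup>2"
proof -
  define n where "n = real (card K) + 1"
  define s1 where "s1 = (\<Sum>j\<in>K. a j - c)"
  define s2 where "s2 = (\<Sum>j\<in>K. (a j - c)\<^sup>2)"
  have sum_a: "(\<Sum>j\<in>K. a j) = s1 + (n - 1) * c"
    by (simp add: s1_def n_def sum_subtractf)
  have "(\<Sum>j\<in>K. (a j)\<^sup>2) = (\<Sum>j\<in>K. (a j - c)\<^sup>2 + 2 * c * (a j - c) + c\<^sup>2)"
    by (rule sum.cong) (auto simp: power2_eq_square algebra_simps)
  then have sum_sq: "(\<Sum>j\<in>K. (a j)\<^sup>2) = s2 + 2 * c * s1 + (n - 1) * c\<^sup>2"
    by (simp add: s1_def s2_def n_def sum.distrib sum_distrib_left)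
  have cauchy_schwarz: "s1\<^sup>2 \<le> (n - 1) * s2"
    using Cauchy_Schwarz_ineq_sum[of "\<lambda>_. 1" "\<lambda>j. a j - c" K]
    by (simp add: s1_def s2_def n_def)
  have "n \<ge> 1"
    by (simp add: n_def)
  then have "((c + (s1 + (n - 1) * c)) / n)\<^sup>2
      = (c\<^sup>2 + (s2 + 2 * c * s1 + (n - 1) * c\<^sup>2)) / n - s2 / n\<^sup>2 - ((n - 1) * s2 - s1\<^sup>2) / n\<^sup>2"
    by (simp add: field_simps power2_eq_square)
  moreover have "((n - 1) * s2 - s1\<^sup>2) / n\<^sup>2 \<ge> 0"
    using cauchy_schwarz by simp
  ultimately show ?thesis
    unfolding n_def[symmetric] s2_def[symmetric] sum_a sum_sq by linarith
qed

lemma l1_dist_sq_le_hellinger: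
  fixes p q :: "'x \<Rightarrow> real"
  assumes "\<And>x. x \<in> X \<Longrightarrow> p x \<ge> 0" and "\<And>x. x \<in> X \<Longrightarrow> q x \<ge> 0"
    and "sum p X = 1" and "sum q X = 1"
  shows "(\<Sum>x\<in>X. \<bar>p x - q x\<bar>)\<^sup>2 \<le> 4 * (\<Sum>x\<in>X. (sqrt (p x) - sqrt (q x))\<^sup>2)"
proof -
  have "(\<Sum>x\<in>X. \<bar>p x - q x\<bar>)
      = (\<Sum>x\<in>X. \<bar>sqrt (p x) - sqrt (q x)\<bar> * (sqrt (p x) + sqrt (q x)))"
  proof (rule sum.cong)
    fix x assume "x \<in> X"
    then have "p x - q x = (sqrt (p x) - sqrt (q x)) * (sqrt (p x) + sqrt (q x))"
      using assms(1,2) by (simp add: algebra_simps)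
    then show "\<bar>p x - q x\<bar> = \<bar>sqrt (p x) - sqrt (q x)\<bar> * (sqrt (p x) + sqrt (q x))"
      using \<open>x \<in> X\<close> assms(1,2) by (simp add: abs_mult)
  qed simp
  then have "(\<Sum>x\<in>X. \<bar>p x - q x\<bar>)\<^sup>2
      \<le> (\<Sum>x\<in>X. (sqrt (p x) - sqrt (q x))\<^sup>2) * (\<Sum>x\<in>X. (sqrt (p x) + sqrt (q x))\<^sup>2)"
    using Cauchy_Schwarz_ineq_sum[of "\<lambda>x. \<bar>sqrt (p x) - sqrt (q x)\<bar>" "\<lambda>x. sqrt (p x) + sqrt (q x)" X]
    by simp
  also have "\<dots> \<le> (\<Sum>x\<in>X. (sqrt (p x) - sqrt (q x))\<^sup>2) * (\<Sum>x\<in>X. 2 * p x + 2 * q x)"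
  proof (intro mult_left_mono sum_mono)
    fix x assume "x \<in> X"
    then show "(sqrt (p x) + sqrt (q x))\<^sup>2 \<le> 2 * p x + 2 * q x"
      using assms(1,2) zero_le_power2[of "sqrt (p x) - sqrt (q x)"]
      unfolding power2_diff power2_sum by simp
  qed (simp add: sum_nonneg)
  also have "(\<Sum>x\<in>X. 2 * p x + 2 * q x) = 4"
    using assms(3,4) by (simp add: sum.distrib sum_distrib_left[symmetric])
  finally show ?thesis
    by simp
qed

lemma sum_geometric_mean_le_one_sub_hellinger:
  fixes q :: "'x \<Rightarrow> real" and p :: "'j \<Rightarrow> 'x \<Rightarrow> real"
  assumes "finite J"
    and q_nonneg: "\<And>x. x \<in> X \<Longrightarrow> q x \<ge> 0" and q_sum: "sum q X = 1"
    and p_nonneg: "\<And>j x. j \<in> J \<Longrightarrow> x \<in> X \<Longrightarrow> p j x \<ge> 0"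
    and p_sum: "\<And>j. j \<in> J \<Longrightarrow> sum (p j) X = 1"
  shows "(\<Sum>x\<in>X. (q x * (\<Prod>j\<in>J. p j x)) powr (1 / (real (card J) + 1)))
    \<le> 1 - (\<Sum>j\<in>J. \<Sum>x\<in>X. (sqrt (p j x) - sqrt (q x))\<^sup>2) / (real (card J) + 1)\<^sup>2"
proof -
  define n where "n = real (card J) + 1"
  have "(\<Sum>x\<in>X. (q x * (\<Prod>j\<in>J. p j x)) powr (1 / n))
      \<le> (\<Sum>x\<in>X. (q x + (\<Sum>j\<in>J. p j x)) / n - (\<Sum>j\<in>J. (sqrt (p j x) - sqrt (q x))\<^sup>2) / n\<^sup>2)"
  proof (rule sum_mono)
    fix x assume x: "x \<in> X"
    have "(q x * (\<Prod>j\<in>J. p j x)) powr (1 / n) \<le> ((sqrt (q x) + (\<Sum>j\<in>J. sqrt (p j x))) / n)\<^sup>2"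
      unfolding n_def using x q_nonneg p_nonneg \<open>finite J\<close>
      by (intro geometric_mean_le_sq_mean_sqrt) auto
    also have "\<dots> \<le> ((sqrt (q x))\<^sup>2 + (\<Sum>j\<in>J. (sqrt (p j x))\<^sup>2)) / n
        - (\<Sum>j\<in>J. (sqrt (p j x) - sqrt (q x))\<^sup>2) / n\<^sup>2"
      unfolding n_def by (rule sq_mean_le_mean_sq_sub_spread[OF \<open>finite J\<close>])
    finally show "(q x * (\<Prod>j\<in>J. p j x)) powr (1 / n) \<le> (q x + (\<Sum>j\<in>J. p j x)) / n
        - (\<Sum>j\<in>J. (sqrt (p j x) - sqrt (q x))\<^sup>2) / n\<^sup>2"
      using x q_nonneg p_nonneg by simp
  qed
  also have "\<dots> = 1 - (\<Sum>j\<in>J. \<Sum>x\<in>X. (sqrt (p j x) - sqrt (q x))\<^sup>2) / n\<^sup>2"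
  proof -
    have "(\<Sum>x\<in>X. \<Sum>j\<in>J. p j x) = n - 1"
      using p_sum by (subst sum.swap) (simp add: n_def)
    moreover have "n > 0"
      by (simp add: n_def)
    ultimately show ?thesis
      using q_sum by (simp add: sum_subtractf sum.distrib sum.swap[of _ X]
          flip: sum_divide_distrib add_divide_distrib)
  qed
  finally show ?thesis
    unfolding n_def .
qed

lemma l1_dist_sq_le_neg_ln_sum_geometric_mean:
  fixes q :: "'x \<Rightarrow> real" and p :: "'j \<Rightarrow> 'x \<Rightarrow> real"
  assumes "finite X" and "finite J"
    and q_pos: "\<And>x. x \<in> X \<Longrightarrow> q x > 0" and q_sum: "sum q X = 1"
    and p_pos: "\<And>j x. j \<in> J \<Longrightarrow> x \<in> X \<Longrightarrow> p j x > 0"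
    and p_sum: "\<And>j. j \<in> J \<Longrightarrow> sum (p j) X = 1"
  shows "1 / (8 * real (card J)) * (\<Sum>j\<in>J. (\<Sum>x\<in>X. \<bar>p j x - q x\<bar>)\<^sup>2)
    \<le> - (real (card J) + 1) * ln (\<Sum>x\<in>X. (q x * (\<Prod>j\<in>J. p j x)) powr (1 / (real (card J) + 1)))"
proof -
  define n where "n = real (card J) + 1"
  define G where "G = (\<Sum>x\<in>X. (q x * (\<Prod>j\<in>J. p j x)) powr (1 / n))"
  define h where "h j = (\<Sum>x\<in>X. (sqrt (p j x) - sqrt (q x))\<^sup>2)" for j
  have n_pos: "n > 0"
    by (simp add: n_def)
  have "q x * (\<Prod>j\<in>J. p j x) > 0" if "x \<in> X" for x
    using that q_pos p_pos by (simp add: prod_pos)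
  moreover have "X \<noteq> {}"
    using q_sum by auto
  ultimately have "G > 0"
    unfolding G_def using \<open>finite X\<close> by (intro sum_pos) (metis powr_gt_zero less_irrefl)+
  moreover have "G \<le> 1 - (\<Sum>j\<in>J. h j) / n\<^sup>2"
    unfolding G_def h_def n_def using q_pos p_pos q_sum p_sum \<open>finite J\<close>
    by (intro sum_geometric_mean_le_one_sub_hellinger) (auto intro: less_imp_le)
  ultimately have "ln G \<le> - (\<Sum>j\<in>J. h j) / n\<^sup>2"
    using ln_le_minus_one[of G] by linarith
  then have "n * ln G \<le> n * (- (\<Sum>j\<in>J. h j) / n\<^sup>2)"
    using n_pos by (intro mult_left_mono) simp_all
  then have "(\<Sum>j\<in>J. h j) / n \<le> - n * ln G"
    using n_pos by (simp add: power2_eq_square)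
  moreover have "1 / (8 * real (card J)) * (\<Sum>j\<in>J. (\<Sum>x\<in>X. \<bar>p j x - q x\<bar>)\<^sup>2)
      \<le> 1 / (8 * real (card J)) * (\<Sum>j\<in>J. 4 * h j)"
    unfolding h_def using q_pos p_pos p_sum q_sum
    by (intro mult_left_mono sum_mono l1_dist_sq_le_hellinger) (auto intro: less_imp_le)
  moreover have "1 / (8 * real (card J)) * (\<Sum>j\<in>J. 4 * h j) \<le> (\<Sum>j\<in>J. h j) / n"
  proof (cases "J = {}")
    case False
    then have "n \<le> 2 * real (card J)"
      using \<open>finite J\<close> by (simp add: n_def card_gt_0_iff Suc_le_eq)
    then have "(\<Sum>j\<in>J. h j) / (2 * real (card J)) \<le> (\<Sum>j\<in>J. h j) / n"
      using n_pos by (intro divide_left_mono) (simp_all add: h_def sum_nonneg)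
    then show ?thesis
      by (simp flip: sum_distrib_left)
  qed (simp add: n_def)
  ultimately show ?thesis
    unfolding G_def n_def by linarith
qed

locale pairwise_dual =
  fixes eta :: real and V :: "'v set" and E :: "'v set set" and X :: "'x set"
    and Cv :: "'v \<Rightarrow> 'x \<Rightarrow> real" and Ce :: "'v set \<Rightarrow> ('v \<Rightarrow> 'x) \<Rightarrow> real"
  assumes eta_pos: "eta > 0"
    and finite_V: "finite V" and finite_E: "finite E" and finite_edge: "\<And>e. e \<in> E \<Longrightarrow> finite e"
    and finite_X: "finite X" and X_ne: "X \<noteq> {}"
begin

abbreviation dual :: "('v set \<Rightarrow> 'v \<Rightarrow> 'x \<Rightarrow> real) \<Rightarrow> real" where
  "dual \<equiv> Ldual eta V E X Cv Ce"

abbreviation vertex_marginal :: "('v set \<Rightarrow> 'v \<Rightarrow> 'x \<Rightarrow> real) \<Rightarrow> 'v \<Rightarrow> 'x \<Rightarrow> real" where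
  "vertex_marginal \<equiv> mu_v eta E X Cv"

abbreviation edge_marginal :: "('v set \<Rightarrow> 'v \<Rightarrow> 'x \<Rightarrow> real) \<Rightarrow> 'v set \<Rightarrow> 'v \<Rightarrow> 'x \<Rightarrow> real" where
  "edge_marginal \<equiv> Smarg eta X Ce"

abbreviation block_update :: "('v set \<Rightarrow> 'v \<Rightarrow> 'x \<Rightarrow> real) \<Rightarrow> 'v \<Rightarrow> 'v set \<Rightarrow> 'v \<Rightarrow> 'x \<Rightarrow> real" where
  "block_update \<equiv> upd eta E X Cv Ce"

definition vertex_weight :: "('v set \<Rightarrow> 'v \<Rightarrow> 'x \<Rightarrow> real) \<Rightarrow> 'v \<Rightarrow> 'x \<Rightarrow> real" where
  "vertex_weight lam v x = exp (- eta * Cv v x + eta * (\<Sum>e\<in>Nb E v. lam e v x))"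

definition edge_weight :: "('v set \<Rightarrow> 'v \<Rightarrow> 'x \<Rightarrow> real) \<Rightarrow> 'v set \<Rightarrow> ('v \<Rightarrow> 'x) \<Rightarrow> real" where
  "edge_weight lam e xe = exp (- eta * Ce e xe - eta * (\<Sum>j\<in>e. lam e j (xe j)))"

definition vertex_partition :: "('v set \<Rightarrow> 'v \<Rightarrow> 'x \<Rightarrow> real) \<Rightarrow> 'v \<Rightarrow> real" where
  "vertex_partition lam v = (\<Sum>x\<in>X. vertex_weight lam v x)"

definition edge_partition :: "('v set \<Rightarrow> 'v \<Rightarrow> 'x \<Rightarrow> real) \<Rightarrow> 'v set \<Rightarrow> real" where
  "edge_partition lam e = (\<Sum>xe\<in>edge_labs e X. edge_weight lam e xe)"

lemma dual_eq_partitions: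
  "dual lam = (\<Sum>v\<in>V. ln (vertex_partition lam v)) / eta + (\<Sum>e\<in>E. ln (edge_partition lam e)) / eta"
  by (simp add: Ldual_def vertex_partition_def vertex_weight_def edge_partition_def edge_weight_def)

lemma vertex_marginal_eq: "vertex_marginal lam v x = vertex_weight lam v x / vertex_partition lam v"
  by (simp add: mu_v_def vertex_partition_def vertex_weight_def)

lemma edge_marginal_eq:
  "edge_marginal lam e i x
    = (\<Sum>xe\<in>{xe \<in> edge_labs e X. xe i = x}. edge_weight lam e xe) / edge_partition lam e"
  by (simp add: Smarg_def mu_e_def edge_partition_def edge_weight_def sum_divide_distrib)

lemma finite_edge_labs: "e \<in> E \<Longrightarrow> finite (edge_labs e X)"
  by (simp add: edge_labs_def finite_PiE finite_edge finite_X)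

lemma const_in_edge_labs: "x \<in> X \<Longrightarrow> restrict (\<lambda>_. x) e \<in> edge_labs e X"
  by (simp add: edge_labs_def)

lemma sum_edge_labs_by_label:
  assumes "e \<in> E" and "i \<in> e"
  shows "(\<Sum>x\<in>X. \<Sum>xe\<in>{xe \<in> edge_labs e X. xe i = x}. f xe) = (\<Sum>xe\<in>edge_labs e X. f xe)"
  using assms finite_edge_labs finite_X
  by (intro sum.group) (auto simp: edge_labs_def)

lemma vertex_partition_pos: "vertex_partition lam v > 0"
  unfolding vertex_partition_def vertex_weight_def using finite_X X_ne by (simp add: sum_pos)

lemma edge_partition_pos:
  assumes "e \<in> E"
  shows "edge_partition lam e > 0"
proof -
  obtain x where "x \<in> X"
    using X_ne by blast
  then show ?thesis
    unfolding edge_partition_def edge_weight_def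
    using assms const_in_edge_labs finite_edge_labs by (intro sum_pos) auto
qed

lemma vertex_marginal_pos: "vertex_marginal lam v x > 0"
  by (simp add: vertex_marginal_eq vertex_partition_pos vertex_weight_def)

lemma sum_vertex_marginal: "(\<Sum>x\<in>X. vertex_marginal lam v x) = 1"
  using vertex_partition_pos[of lam v]
  by (simp add: vertex_marginal_eq vertex_partition_def flip: sum_divide_distrib)

lemma edge_marginal_pos:
  assumes "e \<in> E" and "i \<in> e" and "x \<in> X"
  shows "edge_marginal lam e i x > 0"
proof -
  have "restrict (\<lambda>_. x) e \<in> {xe \<in> edge_labs e X. xe i = x}"
    using assms const_in_edge_labs by simp
  then have "(\<Sum>xe\<in>{xe \<in> edge_labs e X. xe i = x}. edge_weight lam e xe) > 0"
    using assms finite_edge_labs by (intro sum_pos) (auto simp: edge_weight_def)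
  then show ?thesis
    by (simp add: edge_marginal_eq edge_partition_pos assms(1))
qed

lemma sum_edge_marginal:
  assumes "e \<in> E" and "i \<in> e"
  shows "(\<Sum>x\<in>X. edge_marginal lam e i x) = 1"
  using edge_partition_pos[OF assms(1), of lam]
  by (simp add: edge_marginal_eq sum_edge_labs_by_label[OF assms] edge_partition_def
      flip: sum_divide_distrib)

lemma Nb_subset: "Nb E i \<subseteq> E" and mem_Nb: "e \<in> Nb E i \<longleftrightarrow> e \<in> E \<and> i \<in> e"
  by (auto simp: Nb_def)

lemma finite_Nb: "finite (Nb E i)"
  using Nb_subset finite_E by (rule finite_subset)

definition geomean_marginal :: "('v set \<Rightarrow> 'v \<Rightarrow> 'x \<Rightarrow> real) \<Rightarrow> 'v \<Rightarrow> 'x \<Rightarrow> real" where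
  "geomean_marginal lam i x = (vertex_marginal lam i x * (\<Prod>e\<in>Nb E i. edge_marginal lam e i x))
     powr (1 / (real (card (Nb E i)) + 1))"

lemma geomean_marginal_pos:
  assumes "x \<in> X"
  shows "geomean_marginal lam i x > 0"
proof -
  have "(\<Prod>e\<in>Nb E i. edge_marginal lam e i x) > 0"
    using assms by (intro prod_pos) (simp add: mem_Nb edge_marginal_pos less_imp_le)
  then have "vertex_marginal lam i x * (\<Prod>e\<in>Nb E i. edge_marginal lam e i x) > 0"
    by (simp add: vertex_marginal_pos)
  then show ?thesis
    unfolding geomean_marginal_def powr_gt_zero by (metis less_irrefl)
qed

lemma ln_geomean_marginal:
  assumes "x \<in> X"
  shows "(real (card (Nb E i)) + 1) * ln (geomean_marginal lam i x)
    = ln (vertex_marginal lam i x) + (\<Sum>e\<in>Nb E i. ln (edge_marginal lam e i x))"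
proof -
  have pos: "\<And>e. e \<in> Nb E i \<Longrightarrow> edge_marginal lam e i x > 0"
    using assms by (simp add: mem_Nb edge_marginal_pos)
  then have "(\<Prod>e\<in>Nb E i. edge_marginal lam e i x) > 0"
    by (simp add: prod_pos less_imp_le)
  moreover have "ln (\<Prod>e\<in>Nb E i. edge_marginal lam e i x) = (\<Sum>e\<in>Nb E i. ln (edge_marginal lam e i x))"
    using pos by (intro ln_prod finite_Nb) (metis less_irrefl)
  ultimately show ?thesis
    using vertex_marginal_pos[of lam i x] by (simp add: geomean_marginal_def ln_mult)
qed

lemma block_update_eq:
  assumes "e \<in> Nb E i"
  shows "block_update lam i e i x
    = lam e i x + (ln (edge_marginal lam e i x) - ln (geomean_marginal lam i x)) / eta"
  using assms by (simp add: upd_def geomean_marginal_def diff_divide_distrib)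

lemma block_update_other_vertex: "j \<noteq> i \<Longrightarrow> block_update lam i e j = lam e j"
  by (simp add: upd_def)

lemma block_update_other_edge: "e \<notin> Nb E i \<Longrightarrow> block_update lam i e j = lam e j"
  by (simp add: upd_def)

lemma vertex_weight_block_update:
  assumes "x \<in> X"
  shows "vertex_weight (block_update lam i) i x = vertex_partition lam i * geomean_marginal lam i x"
proof -
  define lnG where "lnG = ln (geomean_marginal lam i x)"
  have "(\<Sum>e\<in>Nb E i. block_update lam i e i x)
      = (\<Sum>e\<in>Nb E i. lam e i x + (ln (edge_marginal lam e i x) - lnG) / eta)"
    by (intro sum.cong) (simp_all add: block_update_eq lnG_def)
  also have "\<dots> = (\<Sum>e\<in>Nb E i. lam e i x)
      + ((\<Sum>e\<in>Nb E i. ln (edge_marginal lam e i x)) - real (card (Nb E i)) * lnG) / eta"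
    by (simp add: sum.distrib sum_subtractf flip: sum_divide_distrib)
  also have "(\<Sum>e\<in>Nb E i. ln (edge_marginal lam e i x)) - real (card (Nb E i)) * lnG
      = lnG - ln (vertex_marginal lam i x)"
    using ln_geomean_marginal[OF assms] by (simp add: lnG_def algebra_simps)
  finally have "- eta * Cv i x + eta * (\<Sum>e\<in>Nb E i. block_update lam i e i x)
      = (- eta * Cv i x + eta * (\<Sum>e\<in>Nb E i. lam e i x)) + lnG - ln (vertex_marginal lam i x)"
    using eta_pos by (simp add: field_simps)
  then have "vertex_weight (block_update lam i) i x
      = vertex_weight lam i x * exp lnG / vertex_marginal lam i x"
    using vertex_marginal_pos[of lam i x] by (simp add: vertex_weight_def exp_add exp_diff)
  then show ?thesis
    using assms vertex_partition_pos[of lam i]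
    by (simp add: lnG_def vertex_marginal_eq geomean_marginal_pos vertex_weight_def)
qed

lemma edge_weight_block_update:
  assumes e: "e \<in> Nb E i" and xe: "xe \<in> edge_labs e X"
  shows "edge_weight (block_update lam i) e xe
    = edge_weight lam e xe * (geomean_marginal lam i (xe i) / edge_marginal lam e i (xe i))"
proof -
  have "e \<in> E" and "i \<in> e" and "xe i \<in> X"
    using e xe by (auto simp: mem_Nb edge_labs_def)
  have "(\<Sum>j\<in>e. block_update lam i e j (xe j))
      = block_update lam i e i (xe i) + (\<Sum>j\<in>e - {i}. lam e j (xe j))"
    using \<open>e \<in> E\<close> \<open>i \<in> e\<close> finite_edge by (simp add: sum.remove block_update_other_vertex)
  also have "\<dots> = (\<Sum>j\<in>e. lam e j (xe j))
      + (ln (edge_marginal lam e i (xe i)) - ln (geomean_marginal lam i (xe i))) / eta"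
    using \<open>e \<in> E\<close> \<open>i \<in> e\<close> finite_edge by (simp add: block_update_eq e sum.remove)
  finally have "- eta * Ce e xe - eta * (\<Sum>j\<in>e. block_update lam i e j (xe j))
      = (- eta * Ce e xe - eta * (\<Sum>j\<in>e. lam e j (xe j)))
        + ln (geomean_marginal lam i (xe i)) - ln (edge_marginal lam e i (xe i))"
    using eta_pos by (simp add: field_simps)
  then have "edge_weight (block_update lam i) e xe
      = exp ((- eta * Ce e xe - eta * (\<Sum>j\<in>e. lam e j (xe j)))
        + ln (geomean_marginal lam i (xe i)) - ln (edge_marginal lam e i (xe i)))"
    by (simp only: edge_weight_def)
  then show ?thesis
    using geomean_marginal_pos[OF \<open>xe i \<in> X\<close>]
      edge_marginal_pos[OF \<open>e \<in> E\<close> \<open>i \<in> e\<close> \<open>xe i \<in> X\<close>]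
    by (simp add: edge_weight_def exp_add exp_diff)
qed

lemma vertex_partition_block_update:
  "vertex_partition (block_update lam i) i = vertex_partition lam i * (\<Sum>x\<in>X. geomean_marginal lam i x)"
  unfolding vertex_partition_def[of "block_update lam i"]
  by (simp add: vertex_weight_block_update sum_distrib_left)

lemma edge_partition_block_update:
  assumes e: "e \<in> Nb E i"
  shows "edge_partition (block_update lam i) e = edge_partition lam e * (\<Sum>x\<in>X. geomean_marginal lam i x)"
proof -
  have "e \<in> E" and "i \<in> e"
    using e by (auto simp: mem_Nb)
  let ?fibre = "\<lambda>x. {xe \<in> edge_labs e X. xe i = x}"
  have "edge_partition (block_update lam i) e
      = (\<Sum>x\<in>X. \<Sum>xe\<in>?fibre x. edge_weight lam e xe * (geomean_marginal lam i x / edge_marginal lam e i x))"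
    unfolding edge_partition_def sum_edge_labs_by_label[OF \<open>e \<in> E\<close> \<open>i \<in> e\<close>, symmetric]
    by (intro sum.cong refl) (auto simp: edge_weight_block_update[OF e])
  also have "\<dots> = (\<Sum>x\<in>X. edge_partition lam e * geomean_marginal lam i x)"
  proof (intro sum.cong refl)
    fix x assume "x \<in> X"
    have "(\<Sum>xe\<in>?fibre x. edge_weight lam e xe) = edge_marginal lam e i x * edge_partition lam e"
      using edge_partition_pos[OF \<open>e \<in> E\<close>, of lam] by (simp add: edge_marginal_eq)
    moreover have "(\<Sum>xe\<in>?fibre x. edge_weight lam e xe * (geomean_marginal lam i x / edge_marginal lam e i x))
        = (\<Sum>xe\<in>?fibre x. edge_weight lam e xe) * (geomean_marginal lam i x / edge_marginal lam e i x)"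
      by (rule sum_distrib_right[symmetric])
    ultimately show "(\<Sum>xe\<in>?fibre x. edge_weight lam e xe * (geomean_marginal lam i x / edge_marginal lam e i x))
        = edge_partition lam e * geomean_marginal lam i x"
      using edge_marginal_pos[OF \<open>e \<in> E\<close> \<open>i \<in> e\<close> \<open>x \<in> X\<close>, of lam] by simp
  qed
  finally show ?thesis
    by (simp add: sum_distrib_left)
qed

lemma vertex_partition_block_update_other:
  "v \<noteq> i \<Longrightarrow> vertex_partition (block_update lam i) v = vertex_partition lam v"
  by (simp add: vertex_partition_def vertex_weight_def block_update_other_vertex)

lemma edge_partition_block_update_other:
  "e \<notin> Nb E i \<Longrightarrow> edge_partition (block_update lam i) e = edge_partition lam e"
  by (simp add: edge_partition_def edge_weight_def block_update_other_edge)

lemma dual_sub_block_update: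
  assumes "i \<in> V"
  shows "dual lam - dual (block_update lam i)
    = - (real (card (Nb E i)) + 1) * ln (\<Sum>x\<in>X. geomean_marginal lam i x) / eta"
proof -
  define lnZ where "lnZ = ln (\<Sum>x\<in>X. geomean_marginal lam i x)"
  have "(\<Sum>x\<in>X. geomean_marginal lam i x) > 0"
    using finite_X X_ne by (simp add: sum_pos geomean_marginal_pos)
  then have vertex_part: "(\<Sum>v\<in>V. ln (vertex_partition (block_update lam i) v))
      = (\<Sum>v\<in>V. ln (vertex_partition lam v)) + lnZ"
    using assms finite_V vertex_partition_pos[of lam i]
    by (simp add: sum.remove vertex_partition_block_update vertex_partition_block_update_other
        ln_mult lnZ_def)
  have "(\<Sum>e\<in>E. ln (edge_partition (block_update lam i) e))
      = (\<Sum>e\<in>E. ln (edge_partition lam e) + (if e \<in> Nb E i then lnZ else 0))"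
  proof (intro sum.cong refl)
    fix e assume "e \<in> E"
    then show "ln (edge_partition (block_update lam i) e)
        = ln (edge_partition lam e) + (if e \<in> Nb E i then lnZ else 0)"
      using \<open>(\<Sum>x\<in>X. geomean_marginal lam i x) > 0\<close> edge_partition_pos[of e lam]
      by (simp add: edge_partition_block_update edge_partition_block_update_other ln_mult lnZ_def)
  qed
  also have "\<dots> = (\<Sum>e\<in>E. ln (edge_partition lam e)) + real (card (Nb E i)) * lnZ"
    using finite_E Nb_subset by (simp add: sum.distrib sum.If_cases Int_absorb1)
  finally show ?thesis
    unfolding dual_eq_partitions vertex_part lnZ_def using eta_pos by (simp add: field_simps)
qed

end

theorem lemma2:
  fixes V :: "'v set" and E :: "'v set set" and X :: "'x set"
    and Cv :: "'v \<Rightarrow> 'x \<Rightarrow> real" and Ce :: "'v set \<Rightarrow> ('v \<Rightarrow> 'x) \<Rightarrow> real"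
    and lam :: "'v set \<Rightarrow> 'v \<Rightarrow> 'x \<Rightarrow> real" and eta :: real and i :: 'v
  assumes "finite V"
    and "\<forall>e\<in>E. e \<subseteq> V \<and> card e = 2"
    and "\<forall>v\<in>V. \<exists>e\<in>E. v \<in> e"
    and "finite X" and "card X \<ge> 2"
    and "eta > 0" and "i \<in> V"
  shows "Ldual eta V E X Cv Ce lam - Ldual eta V E X Cv Ce (upd eta E X Cv Ce lam i)
     \<ge> 1 / (8 * real (card (Nb E i)) * eta)
       * (\<Sum>e\<in>Nb E i. (\<Sum>x\<in>X. \<bar>slack eta E X Cv Ce lam e i x\<bar>)^2)"
proof -
  interpret pairwise_dual eta V E X Cv Ce
  proof
    show "finite E"
      using assms(1,2) by (metis Pow_iff finite_Pow_iff finite_subset subsetI)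
    show "finite e" if "e \<in> E" for e
      using assms(2) that card.infinite by fastforce
    show "X \<noteq> {}"
      using assms(5) by auto
  qed (use assms in auto)
  have "1 / (8 * real (card (Nb E i))) * (\<Sum>e\<in>Nb E i. (\<Sum>x\<in>X. \<bar>slack eta E X Cv Ce lam e i x\<bar>)\<^sup>2)
      \<le> - (real (card (Nb E i)) + 1) * ln (\<Sum>x\<in>X. geomean_marginal lam i x)"
    unfolding slack_def geomean_marginal_def
    using finite_Nb vertex_marginal_pos sum_vertex_marginal edge_marginal_pos sum_edge_marginal
    by (intro l1_dist_sq_le_neg_ln_sum_geometric_mean finite_X) (auto simp: mem_Nb)
  then have "1 / (8 * real (card (Nb E i))) * (\<Sum>e\<in>Nb E i. (\<Sum>x\<in>X. \<bar>slack eta E X Cv Ce lam e i x\<bar>)\<^sup>2) / eta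
      \<le> - (real (card (Nb E i)) + 1) * ln (\<Sum>x\<in>X. geomean_marginal lam i x) / eta"
    using eta_pos by (intro divide_right_mono) auto
  then show ?thesis
    using dual_sub_block_update[OF assms(7), of lam] by simp
qed

end
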